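(* Let $r\in\mathbb{R}$, $r\neq 0$. Then $\{r^k\}_{k=0}^{\infty}$ is a Legendre multiplier sequence if and only if $|r|=1$.
   Context: The Legendre polynomials $\mathfrak{Le}_n(x)$ are defined by $\frac{1}{\sqrt{1-2xt+t^2}}=\sum_{k=0}^{\infty}\mathfrak{Le}_k(x)t^k$. A real sequence $\{\gamma_k\}_{k=0}^{\infty}$ is a Legendre multiplier sequence if, for every $n$ and all real $a_0,\dots,a_n$, the polynomial $\sum_{k=0}^n a_k\gamma_k\mathfrak{Le}_k(x)$ has only real zeros whenever $\sum_{k=0}^n a_k\mathfrak{Le}_k(x)$ has only real zeros. *)

theory Defs
  imports "HOL-Analysis.Analysis" "HOL-Computational_Algebra.Polynomial"
begin

definition Leg_fun :: "nat \<Rightarrow> real \<Rightarrow> real" where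
  "Leg_fun n x = (deriv ^^ n) (\<lambda>t. 1 / sqrt (1 - 2 * x * t + t\<^sup>2)) 0 / fact n"

definition Leg :: "nat \<Rightarrow> real poly" where
  "Leg n = (THE p. \<forall>x. poly p x = Leg_fun n x)"

definition only_real_zeros :: "real poly \<Rightarrow> bool" where
  "only_real_zeros p \<longleftrightarrow> (\<forall>z::complex. poly (map_poly complex_of_real p) z = 0 \<longrightarrow> z \<in> \<real>)"

definition legendre_multiplier_sequence :: "(nat \<Rightarrow> real) \<Rightarrow> bool" where
  "legendre_multiplier_sequence \<gamma> \<longleftrightarrow>
     (\<forall>n (a :: nat \<Rightarrow> real).
        only_real_zeros (\<Sum>k\<le>n. smult (a k) (Leg k)) \<longrightarrow>
        only_real_zeros (\<Sum>k\<le>n. smult (a k * \<gamma> k) (Leg k)))"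

end

theory Submission
  imports Defs
begin

text \<open>
  By the generating function, \<open>G(-x, t) = G(x, -t)\<close>, so \<open>P\<^sub>k(-x) = (-1)\<^sup>k P\<^sub>k(x)\<close>; hence
  the multiplier \<open>(-1)\<^sup>k\<close> acts as the reflection \<open>x \<mapsto> -x\<close>, which preserves real-rootedness,
  and \<open>1\<^sup>k\<close> acts trivially. For \<open>|r| < 1\<close> the multiplier sends
  \<open>x\<^sup>2 = (P\<^sub>0 + 2 P\<^sub>2) / 3\<close> to \<open>r\<^sup>2 x\<^sup>2 + (1 - r\<^sup>2) / 3\<close>, which has non-real zeros. For
  \<open>|r| > 1\<close> and \<open>v = sqrt (r\<^sup>2 - 1)\<close> it sends \<open>(x - v)\<^sup>3\<close> to \<open>x\<close> times a quadratic of
  negative discriminant.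
\<close>

definition legendre_gen :: "real \<Rightarrow> real \<Rightarrow> real" where
  "legendre_gen x t = 1 / sqrt (1 - 2 * x * t + t\<^sup>2)"

definition legendre_gen_domain :: "real \<Rightarrow> real set" where
  "legendre_gen_domain x = {t. 0 < 1 - 2 * x * t + t\<^sup>2}"

lemma open_legendre_gen_domain: "open (legendre_gen_domain x)"
  unfolding legendre_gen_domain_def by (intro open_Collect_less continuous_intros)

lemma zero_in_legendre_gen_domain: "0 \<in> legendre_gen_domain x"
  by (simp add: legendre_gen_domain_def)

lemma legendre_gen_minus: "legendre_gen (- x) t = legendre_gen x (- t)"
  by (simp add: legendre_gen_def)

lemma has_real_derivative_legendre_gen:
  assumes "t \<in> legendre_gen_domain x"
  shows "(legendre_gen x has_real_derivative (x - t) * legendre_gen x t ^ 3) (at t)"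
proof -
  define Q where "Q = 1 - 2 * x * t + t\<^sup>2"
  have "Q > 0" using assms by (simp add: Q_def legendre_gen_domain_def)
  have "(legendre_gen x has_real_derivative
          - (inverse (sqrt Q) / 2 * (- (2 * x) + 2 * t)) / (sqrt Q)\<^sup>2) (at t)"
    unfolding Q_def legendre_gen_def[abs_def] using assms
    by (auto intro!: derivative_eq_intros simp: legendre_gen_domain_def power2_eq_square)
  also have "- (inverse (sqrt Q) / 2 * (- (2 * x) + 2 * t)) / (sqrt Q)\<^sup>2
               = (x - t) * (1 / sqrt Q) ^ 3"
    using \<open>Q > 0\<close> by (simp add: field_simps power_def)
  also have "\<dots> = (x - t) * legendre_gen x t ^ 3"
    by (simp add: Q_def legendre_gen_def)
  finally show ?thesis .
qed

text \<open>
  Since \<open>\<partial>\<^sub>t G = (x - t) G\<^sup>3\<close> for the generating function \<open>G\<close>, all its \<open>t\<close>-derivatives are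
  expressions in polynomials of \<open>x\<close>, the variable \<open>t\<close> and \<open>G\<close> itself. Differentiating such
  expressions symbolically and evaluating at \<open>t = 0\<close> (where \<open>G = 1\<close>) exhibits the
  Legendre polynomials as explicit polynomials.
\<close>

datatype gen_expr = GPoly "real poly" | GVar | GGen | GAdd gen_expr gen_expr | GMul gen_expr gen_expr

fun geval :: "gen_expr \<Rightarrow> real \<Rightarrow> real \<Rightarrow> real" where
  "geval (GPoly p) x t = poly p x"
| "geval GVar x t = t"
| "geval GGen x t = legendre_gen x t"
| "geval (GAdd a b) x t = geval a x t + geval b x t"
| "geval (GMul a b) x t = geval a x t * geval b x t"

fun gderiv :: "gen_expr \<Rightarrow> gen_expr" where
  "gderiv (GPoly p) = GPoly 0"
| "gderiv GVar = GPoly 1"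
| "gderiv GGen = GMul (GAdd (GPoly [:0, 1:]) (GMul (GPoly [:-1:]) GVar)) (GMul GGen (GMul GGen GGen))"
| "gderiv (GAdd a b) = GAdd (gderiv a) (gderiv b)"
| "gderiv (GMul a b) = GAdd (GMul (gderiv a) b) (GMul a (gderiv b))"

fun gpoly_at_0 :: "gen_expr \<Rightarrow> real poly" where
  "gpoly_at_0 (GPoly p) = p"
| "gpoly_at_0 GVar = 0"
| "gpoly_at_0 GGen = 1"
| "gpoly_at_0 (GAdd a b) = gpoly_at_0 a + gpoly_at_0 b"
| "gpoly_at_0 (GMul a b) = gpoly_at_0 a * gpoly_at_0 b"

lemma geval_at_0: "geval e x 0 = poly (gpoly_at_0 e) x"
  by (induction e) (simp_all add: legendre_gen_def)

lemma has_real_derivative_geval: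
  assumes "t \<in> legendre_gen_domain x"
  shows "((\<lambda>t. geval e x t) has_real_derivative geval (gderiv e) x t) (at t)"
proof (induction e)
  case GGen
  show ?case
    using has_real_derivative_legendre_gen[OF assms]
    by (simp add: power3_eq_cube algebra_simps)
qed (auto intro!: derivative_eq_intros)

lemma higher_deriv_legendre_gen:
  "t \<in> legendre_gen_domain x \<Longrightarrow> (deriv ^^ n) (legendre_gen x) t = geval ((gderiv ^^ n) GGen) x t"
proof (induction n arbitrary: t)
  case (Suc n)
  have "((deriv ^^ n) (legendre_gen x) has_real_derivative geval (gderiv ((gderiv ^^ n) GGen)) x t) (at t)"
    using has_real_derivative_geval[OF Suc.prems]
    by (rule has_field_derivative_transform_within_open[OF _ open_legendre_gen_domain Suc.prems])
       (simp add: Suc.IH)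
  then show ?case by (simp add: DERIV_imp_deriv)
qed (simp add: fun_eq_iff)

lemma higher_deriv_legendre_gen_differentiable:
  assumes "t \<in> legendre_gen_domain x"
  shows "(deriv ^^ n) (legendre_gen x) differentiable (at t)"
proof -
  have "((deriv ^^ n) (legendre_gen x) has_real_derivative geval (gderiv ((gderiv ^^ n) GGen)) x t) (at t)"
    using has_real_derivative_geval[OF assms]
    by (rule has_field_derivative_transform_within_open[OF _ open_legendre_gen_domain assms])
       (simp add: higher_deriv_legendre_gen)
  then show ?thesis by (auto simp: real_differentiable_def)
qed

lemma Leg_fun_eq: "Leg_fun n x = poly (smult (1 / fact n) (gpoly_at_0 ((gderiv ^^ n) GGen))) x"
  using higher_deriv_legendre_gen[OF zero_in_legendre_gen_domain]
  by (simp add: Leg_fun_def legendre_gen_def[abs_def] geval_at_0)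

lemma Leg_eq: "Leg n = smult (1 / fact n) (gpoly_at_0 ((gderiv ^^ n) GGen))"
  unfolding Leg_def
  by (rule the_equality) (auto simp: Leg_fun_eq poly_eq_poly_eq_iff[symmetric])

lemma poly_Leg: "poly (Leg n) x = (deriv ^^ n) (legendre_gen x) 0 / fact n"
  by (simp add: Leg_eq higher_deriv_legendre_gen[OF zero_in_legendre_gen_domain] geval_at_0)

lemma Leg_0: "Leg 0 = 1"
  and Leg_1: "Leg (Suc 0) = [:0, 1:]"
  and Leg_2: "Leg (Suc (Suc 0)) = [:-1/2, 0, 3/2:]"
  and Leg_3: "Leg (Suc (Suc (Suc 0))) = [:0, -3/2, 0, 5/2:]"
  by (simp_all add: Leg_eq numeral_2_eq_2 numeral_3_eq_3)

lemma higher_deriv_compose_uminus: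
  fixes f :: "real \<Rightarrow> real"
  assumes "open S"
    and smooth: "\<And>k s. s \<in> S \<Longrightarrow> (deriv ^^ k) f differentiable (at s)"
    and "- t \<in> S"
  shows "(deriv ^^ n) (\<lambda>s. f (- s)) t = (-1) ^ n * (deriv ^^ n) f (- t)"
  using \<open>- t \<in> S\<close>
proof (induction n arbitrary: t)
  case (Suc n)
  have "((deriv ^^ n) f has_real_derivative (deriv ^^ Suc n) f (- t)) (at (- t))"
    using smooth[OF Suc.prems] by (simp add: DERIV_deriv_iff_real_differentiable)
  then have "((\<lambda>s. (deriv ^^ n) f (- s)) has_real_derivative (deriv ^^ Suc n) f (- t) * -1) (at t)"
    by (rule DERIV_chain2[where g = uminus]) (rule DERIV_minus[OF DERIV_ident])
  then have "((\<lambda>s. (-1) ^ n * (deriv ^^ n) f (- s)) has_real_derivative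
               (-1) ^ n * ((deriv ^^ Suc n) f (- t) * -1)) (at t)"
    by (rule DERIV_cmult)
  moreover have "open (uminus -` S :: real set)"
    using \<open>open S\<close> by (intro continuous_open_vimage) auto
  ultimately have "((deriv ^^ n) (\<lambda>s. f (- s)) has_real_derivative
                     (-1) ^ n * ((deriv ^^ Suc n) f (- t) * -1)) (at t)"
    by (rule has_field_derivative_transform_within_open) (simp_all add: Suc.prems Suc.IH)
  then show ?case by (simp add: DERIV_imp_deriv)
qed simp

lemma poly_Leg_minus: "poly (Leg n) (- x) = (-1) ^ n * poly (Leg n) x"
proof -
  have "(deriv ^^ n) (legendre_gen (- x)) 0 = (deriv ^^ n) (\<lambda>s. legendre_gen x (- s)) 0"
    by (simp add: legendre_gen_minus[abs_def])
  also have "\<dots> = (-1) ^ n * (deriv ^^ n) (legendre_gen x) 0"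
    using higher_deriv_compose_uminus[OF open_legendre_gen_domain higher_deriv_legendre_gen_differentiable]
    by (simp add: zero_in_legendre_gen_domain)
  finally show ?thesis by (simp add: poly_Leg)
qed

lemma map_poly_of_real_mult:
  "map_poly (of_real :: real \<Rightarrow> 'a :: {real_algebra_1, comm_ring_1}) (p * q)
     = map_poly of_real p * map_poly of_real q"
  by (rule poly_eqI) (simp add: coeff_mult coeff_map_poly)

lemma map_poly_of_real_power:
  "map_poly (of_real :: real \<Rightarrow> 'a :: {real_algebra_1, comm_ring_1}) (p ^ n) = map_poly of_real p ^ n"
  by (induction n) (simp_all add: map_poly_of_real_mult)

lemma only_real_zeros_linear_power: "only_real_zeros ([:- v, 1:] ^ n)"
  unfolding only_real_zeros_def
  by (auto simp: map_poly_of_real_power map_poly_pCons)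

lemma only_real_zeros_mult_left:
  assumes "only_real_zeros (p * q)"
  shows "only_real_zeros q"
  using assms unfolding only_real_zeros_def by (auto simp: map_poly_of_real_mult)

lemma only_real_zeros_reflect:
  assumes "only_real_zeros p"
  shows "only_real_zeros (p \<circ>\<^sub>p [:0, -1:])"
proof -
  have "map_poly complex_of_real (p \<circ>\<^sub>p [:0, -1:]) = map_poly complex_of_real p \<circ>\<^sub>p [:0, -1:]"
    by (rule poly_eqI) (simp add: coeff_map_poly coeff_pcompose_linear)
  then show ?thesis
    using assms unfolding only_real_zeros_def by (auto simp: poly_pcompose dest: Reals_minus)
qed

lemma not_only_real_zeros_quadratic:
  assumes "a \<noteq> 0" and "b\<^sup>2 < 4 * a * c"
  shows "\<not> only_real_zeros [:c, b, a:]"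
proof -
  define d where "d = sqrt (4 * a * c - b\<^sup>2)"
  have "d > 0" and d2: "d\<^sup>2 = 4 * a * c - b\<^sup>2"
    using assms(2) by (simp_all add: d_def)
  define z where "z = Complex (- b / (2 * a)) (d / (2 * a))"
  have "poly (map_poly complex_of_real [:c, b, a:]) z = 0"
    using assms(1) d2
    by (simp add: z_def map_poly_pCons complex_eq_iff power2_eq_square field_simps) algebra
  moreover have "z \<notin> \<real>"
    using \<open>d > 0\<close> assms(1) by (simp add: z_def complex_is_Real_iff)
  ultimately show ?thesis
    unfolding only_real_zeros_def by blast
qed

lemma Leg_sum_alternating:
  "(\<Sum>k\<le>n. smult (a k * (-1) ^ k) (Leg k)) = (\<Sum>k\<le>n. smult (a k) (Leg k)) \<circ>\<^sub>p [:0, -1:]"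
  by (rule poly_eq_poly_eq_iff[THEN iffD1])
     (simp add: fun_eq_iff poly_pcompose poly_sum poly_Leg_minus mult_ac)

lemma legendre_multiplier_sequence_alternating: "legendre_multiplier_sequence (\<lambda>k. (-1) ^ k)"
  unfolding legendre_multiplier_sequence_def Leg_sum_alternating
  by (blast intro: only_real_zeros_reflect)

lemma not_legendre_multiplier_sequence_power_lt_1:
  fixes r :: real
  assumes "r \<noteq> 0" and "\<bar>r\<bar> < 1"
  shows "\<not> legendre_multiplier_sequence (\<lambda>k. r ^ k)"
proof
  assume "legendre_multiplier_sequence (\<lambda>k. r ^ k)"
  define a :: "nat \<Rightarrow> real" where "a k = (if k = 0 then 1/3 else if k = 2 then 2/3 else 0)" for k
  have "(\<Sum>k\<le>2. smult (a k) (Leg k)) = [:0, 1:] ^ 2"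
    by (simp add: a_def Leg_0 Leg_2 numeral_2_eq_2 one_pCons)
  then have "only_real_zeros (\<Sum>k\<le>2. smult (a k * r ^ k) (Leg k))"
    using \<open>legendre_multiplier_sequence _\<close> only_real_zeros_linear_power[of 0, unfolded minus_zero]
    unfolding legendre_multiplier_sequence_def by metis
  also have "(\<Sum>k\<le>2. smult (a k * r ^ k) (Leg k)) = [:(1 - r\<^sup>2) / 3, 0, r\<^sup>2:]"
    by (simp add: a_def Leg_0 Leg_2 numeral_2_eq_2 one_pCons field_simps)
  finally have "only_real_zeros [:(1 - r\<^sup>2) / 3, 0, r\<^sup>2:]" .
  moreover have "0\<^sup>2 < 4 * r\<^sup>2 * ((1 - r\<^sup>2) / 3)"
    using assms by (simp add: abs_square_less_1)
  ultimately show False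
    using not_only_real_zeros_quadratic assms(1) by simp
qed

lemma not_legendre_multiplier_sequence_power_gt_1:
  fixes r :: real
  assumes "\<bar>r\<bar> > 1"
  shows "\<not> legendre_multiplier_sequence (\<lambda>k. r ^ k)"
proof
  assume "legendre_multiplier_sequence (\<lambda>k. r ^ k)"
  define v where "v = sqrt (r\<^sup>2 - 1)"
  have "1 < r\<^sup>2"
    using one_less_power[OF assms, of 2] by simp
  then have r2: "r\<^sup>2 = 1 + v\<^sup>2"
    by (simp add: v_def)
  define a :: "nat \<Rightarrow> real" where
    "a k = (if k = 0 then - v * r\<^sup>2 else if k = 1 then 3 * r\<^sup>2 - 12/5
            else if k = 2 then -2 * v else if k = 3 then 2/5 else 0)" for k
  have "(\<Sum>k\<le>3. smult (a k) (Leg k)) = [:- v, 1:] ^ 3"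
    by (simp add: a_def Leg_0 Leg_1 Leg_2 Leg_3 numeral_3_eq_3 one_pCons field_simps r2)
       (simp add: power2_eq_square algebra_simps)
  then have "only_real_zeros (\<Sum>k\<le>3. smult (a k * r ^ k) (Leg k))"
    using \<open>legendre_multiplier_sequence _\<close> only_real_zeros_linear_power
    unfolding legendre_multiplier_sequence_def by metis
  also have "(\<Sum>k\<le>3. smult (a k * r ^ k) (Leg k))
               = [:0, 1:] * [:12/5 * r * (r\<^sup>2 - 1), -3 * v * r\<^sup>2, r ^ 3:]"
    by (simp add: a_def Leg_0 Leg_1 Leg_2 Leg_3 numeral_3_eq_3 one_pCons field_simps power2_eq_square)
  finally have real_zeros: "only_real_zeros [:12/5 * r * (r\<^sup>2 - 1), -3 * v * r\<^sup>2, r ^ 3:]"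
    by (rule only_real_zeros_mult_left)
  have "r ^ 3 \<noteq> 0"
    using assms by auto
  moreover have "(-3 * v * r\<^sup>2)\<^sup>2 < 4 * r ^ 3 * (12/5 * r * (r\<^sup>2 - 1))"
  proof -
    define X where "X = (r\<^sup>2 - 1) * (r\<^sup>2)\<^sup>2"
    have "(-3 * v * r\<^sup>2)\<^sup>2 = 9 * X"
      using r2 by (simp add: X_def power_mult_distrib)
    moreover have "4 * r ^ 3 * (12/5 * r * (r\<^sup>2 - 1)) = 48/5 * X"
      by (simp add: X_def eval_nat_numeral)
    moreover have "0 < X"
      using \<open>1 < r\<^sup>2\<close> unfolding X_def by (intro mult_pos_pos) auto
    ultimately show ?thesis by linarith
  qed
  ultimately show False
    using not_only_real_zeros_quadratic real_zeros by blast
qed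

theorem theorem4p11:
  fixes r :: real
  assumes "r \<noteq> 0"
  shows "legendre_multiplier_sequence (\<lambda>k. r ^ k) \<longleftrightarrow> \<bar>r\<bar> = 1"
proof
  assume "legendre_multiplier_sequence (\<lambda>k. r ^ k)"
  then show "\<bar>r\<bar> = 1"
    using not_legendre_multiplier_sequence_power_lt_1[OF assms]
      not_legendre_multiplier_sequence_power_gt_1
    by (meson linorder_neqE_linordered_idom)
next
  assume "\<bar>r\<bar> = 1"
  then consider "r = 1" | "r = -1" by linarith
  then show "legendre_multiplier_sequence (\<lambda>k. r ^ k)"
  proof cases
    case 1
    then show ?thesis by (simp add: legendre_multiplier_sequence_def)
  next
    case 2
    then show ?thesis by (simp add: legendre_multiplier_sequence_alternating)
  qed
qed

end
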